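(* Let $N\subseteq QI(\mathbb{R}_{+})$ be the set of classes $[f]$ of quasi-isometries $f$ of $\mathbb{R}_+$ satisfying $\lim_{x\to\infty} f(x)/x=1$. Then $N$ is a normal subgroup of $QI(\mathbb{R}_{+})$ and the center of the quotient group $QI(\mathbb{R}_{+})/N$ is trivial.
   Context: $\mathbb{R}_+=[0,\infty)$ with the Euclidean metric $d$. A quasi-isometry of a metric space $(X,d)$ is a map $f:X\to X$ for which there are constants $\mu\ge1$, $\delta>0$, $M>0$ with $\mu^{-1}d(x,y)-\delta\le d(f(x),f(y))\le \mu d(x,y)+\delta$ for all $x,y\in X$ and every point of $X$ within distance $M$ of $f(X)$. Two maps $f,g:X\to X$ are equivalent if $\sup_x d(f(x),g(x))<\infty$; $[f]$ denotes the class of $f$, and $QI(X)$ is the group of classes of quasi-isometries of $X$ under $[f][g]=[f\circ g]$. (The condition $\lim f(x)/x=1$ depends only on the class $[f]$.) *)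

theory Defs
  imports "HOL-Analysis.Analysis" "HOL-Algebra.Algebra"
begin

text \<open>Maps of R+ = [0,inf) are modelled as functions real => real; only their
  values on [0,inf) matter, and they must map [0,inf) into [0,inf).\<close>

definition rplus_map :: "(real \<Rightarrow> real) \<Rightarrow> bool" where
  "rplus_map f \<longleftrightarrow> (\<forall>x\<ge>0. f x \<ge> 0)"

definition is_qi :: "(real \<Rightarrow> real) \<Rightarrow> bool" where
  "is_qi f \<longleftrightarrow> rplus_map f \<and>
     (\<exists>\<mu> \<delta> M. \<mu> \<ge> 1 \<and> \<delta> > 0 \<and> M > 0 \<and>
        (\<forall>x\<ge>0. \<forall>y\<ge>0. dist x y / \<mu> - \<delta> \<le> dist (f x) (f y) \<and>
                       dist (f x) (f y) \<le> \<mu> * dist x y + \<delta>) \<and>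
        (\<forall>y\<ge>0. \<exists>x\<ge>0. dist y (f x) \<le> M))"

definition qi_equiv :: "(real \<Rightarrow> real) \<Rightarrow> (real \<Rightarrow> real) \<Rightarrow> bool" where
  "qi_equiv f g \<longleftrightarrow> (\<exists>C. \<forall>x\<ge>0. dist (f x) (g x) \<le> C)"

definition qi_class :: "(real \<Rightarrow> real) \<Rightarrow> (real \<Rightarrow> real) set" where
  "qi_class f = {g. rplus_map g \<and> qi_equiv f g}"

definition QI_Rplus :: "(real \<Rightarrow> real) set monoid" where
  "QI_Rplus = \<lparr> carrier = qi_class ` {f. is_qi f},
                mult = (\<lambda>A B. qi_class ((SOME f. f \<in> A) \<circ> (SOME g. g \<in> B))),
                one = qi_class id \<rparr>"

definition N_Rplus :: "(real \<Rightarrow> real) set set" where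
  "N_Rplus = {qi_class f | f. is_qi f \<and> ((\<lambda>x. f x / x) \<longlongrightarrow> 1) at_top}"

definition group_center :: "('a, 'b) monoid_scheme \<Rightarrow> 'a set" where
  "group_center G = {z \<in> carrier G. \<forall>x \<in> carrier G. z \<otimes>\<^bsub>G\<^esub> x = x \<otimes>\<^bsub>G\<^esub> z}"

end

theory Submission
  imports Defs "HOL-Library.Landau_Symbols"
begin

text \<open>A quasi-isometry g of R+ distorts distances by at most a factor and an additive
  constant, so g(f(y)) - g(y) = o(y) whenever f(y) - y = o(y). Hence conjugating a map
  asymptotic to the identity gives again such a map, and N is normal.

  For the centre, suppose [f] commutes with every class modulo N although f(x)/x does not
  tend to 1. Pick a very sparse sequence x_n tending to infinity with |f(x_n) - x_n| > e x_n
  and put g(x) = x + d(x, S)/2 with S = {0} \<union> {f(x_n)}. Then g is a quasi-isometry which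
  fixes every f(x_n) but moves every x_n by at least e x_n / 2, so f(g(x_n)) and g(f(x_n)) =
  f(x_n) are a linear distance apart, which no h with h(x)/x \<longrightarrow> 1 can compensate.\<close>

section \<open>Quasi-isometries of R+\<close>

lemma qi_equiv_refl: "qi_equiv f f"
  unfolding qi_equiv_def by (rule exI[of _ 0]) simp

lemma qi_equiv_sym: "qi_equiv f g \<Longrightarrow> qi_equiv g f"
  unfolding qi_equiv_def by (simp add: dist_commute)

lemma qi_equiv_trans:
  assumes "qi_equiv f g" "qi_equiv g h"
  shows "qi_equiv f h"
proof -
  obtain C D where "\<forall>x\<ge>0. dist (f x) (g x) \<le> C" "\<forall>x\<ge>0. dist (g x) (h x) \<le> D"
    using assms unfolding qi_equiv_def by blast
  then have "\<forall>x\<ge>0. dist (f x) (h x) \<le> C + D"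
    by (smt (verit) dist_triangle)
  then show ?thesis unfolding qi_equiv_def by blast
qed

lemma mem_qi_class_iff: "g \<in> qi_class f \<longleftrightarrow> rplus_map g \<and> qi_equiv f g"
  unfolding qi_class_def by simp

lemma qi_class_self: "rplus_map f \<Longrightarrow> f \<in> qi_class f"
  by (simp add: mem_qi_class_iff qi_equiv_refl)

lemma qi_class_eqI: "qi_equiv f g \<Longrightarrow> qi_class f = qi_class g"
  unfolding qi_class_def using qi_equiv_trans qi_equiv_sym by blast

lemma some_mem_qi_class:
  assumes "rplus_map f"
  shows "rplus_map (SOME g. g \<in> qi_class f)" "qi_equiv f (SOME g. g \<in> qi_class f)"
  using someI[of "\<lambda>g. g \<in> qi_class f", OF qi_class_self[OF assms]]
  by (simp_all add: mem_qi_class_iff)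

lemma is_qiI:
  assumes "rplus_map f" "\<mu> \<ge> 1" "\<delta> > 0" "M > 0"
    and "\<And>x y. x \<ge> 0 \<Longrightarrow> y \<ge> 0 \<Longrightarrow> dist x y / \<mu> - \<delta> \<le> dist (f x) (f y)"
    and "\<And>x y. x \<ge> 0 \<Longrightarrow> y \<ge> 0 \<Longrightarrow> dist (f x) (f y) \<le> \<mu> * dist x y + \<delta>"
    and "\<And>y. y \<ge> 0 \<Longrightarrow> \<exists>x\<ge>0. dist y (f x) \<le> M"
  shows "is_qi f"
  unfolding is_qi_def using assms by (intro conjI exI[of _ \<mu>] exI[of _ \<delta>] exI[of _ M]) auto

lemma is_qiE:
  assumes "is_qi f"
  obtains \<mu> \<delta> M where "\<mu> \<ge> 1" "\<delta> > 0" "M > 0" "\<And>x. x \<ge> 0 \<Longrightarrow> f x \<ge> 0"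
    "\<And>x y. x \<ge> 0 \<Longrightarrow> y \<ge> 0 \<Longrightarrow> dist x y / \<mu> - \<delta> \<le> dist (f x) (f y)"
    "\<And>x y. x \<ge> 0 \<Longrightarrow> y \<ge> 0 \<Longrightarrow> dist (f x) (f y) \<le> \<mu> * dist x y + \<delta>"
    "\<And>y. y \<ge> 0 \<Longrightarrow> \<exists>x\<ge>0. dist y (f x) \<le> M"
proof -
  obtain \<mu> \<delta> M where "\<mu> \<ge> 1" "\<delta> > 0" "M > 0"
    and bounds: "\<forall>x\<ge>0. \<forall>y\<ge>0. dist x y / \<mu> - \<delta> \<le> dist (f x) (f y) \<and>
                                dist (f x) (f y) \<le> \<mu> * dist x y + \<delta>"
    and surj: "\<forall>y\<ge>0. \<exists>x\<ge>0. dist y (f x) \<le> M"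
    using assms unfolding is_qi_def by blast
  moreover have "\<And>x. x \<ge> 0 \<Longrightarrow> f x \<ge> 0"
    using assms unfolding is_qi_def rplus_map_def by blast
  ultimately show thesis
    using that[of \<mu> \<delta> M] bounds surj by blast
qed

lemma is_qi_rplus_map: "is_qi f \<Longrightarrow> rplus_map f"
  unfolding is_qi_def by blast

lemma is_qi_nonneg: "is_qi f \<Longrightarrow> x \<ge> 0 \<Longrightarrow> f x \<ge> 0"
  unfolding is_qi_def rplus_map_def by blast

lemma is_qi_linear_bounds:
  assumes "is_qi f"
  obtains \<mu> c where "\<mu> \<ge> 1" "c \<ge> 0" "\<And>x. x \<ge> 0 \<Longrightarrow> x / \<mu> - c \<le> f x \<and> f x \<le> \<mu> * x + c"
proof -
  obtain \<mu> \<delta> M where \<mu>: "\<mu> \<ge> 1" and \<delta>: "\<delta> > 0" and nonneg: "\<And>x. x \<ge> 0 \<Longrightarrow> f x \<ge> 0"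
    and lower: "\<And>x y. x \<ge> 0 \<Longrightarrow> y \<ge> 0 \<Longrightarrow> dist x y / \<mu> - \<delta> \<le> dist (f x) (f y)"
    and upper: "\<And>x y. x \<ge> 0 \<Longrightarrow> y \<ge> 0 \<Longrightarrow> dist (f x) (f y) \<le> \<mu> * dist x y + \<delta>"
    using is_qiE[OF assms] by metis
  have "x / \<mu> - (f 0 + \<delta>) \<le> f x \<and> f x \<le> \<mu> * x + (f 0 + \<delta>)" if "x \<ge> 0" for x
    using lower[OF that, of 0] upper[OF that, of 0] nonneg[OF that] nonneg[of 0] that
    by (auto simp: dist_real_def)
  with \<mu> \<delta> nonneg[of 0] show ?thesis by (intro that[of \<mu> "f 0 + \<delta>"]) auto
qed

lemma is_qi_id: "is_qi id"
  by (rule is_qiI[of _ 1 1 1]) (auto simp: rplus_map_def)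

lemma qi_embedding_comp:
  fixes f g :: "real \<Rightarrow> real"
  assumes "\<mu>1 \<ge> 1" "\<mu>2 \<ge> 1" "\<delta>2 \<ge> 0" and g0: "\<And>x. x \<ge> 0 \<Longrightarrow> g x \<ge> 0"
    and lo1: "\<And>x y. x \<ge> 0 \<Longrightarrow> y \<ge> 0 \<Longrightarrow> dist x y / \<mu>1 - \<delta>1 \<le> dist (f x) (f y)"
    and up1: "\<And>x y. x \<ge> 0 \<Longrightarrow> y \<ge> 0 \<Longrightarrow> dist (f x) (f y) \<le> \<mu>1 * dist x y + \<delta>1"
    and lo2: "\<And>x y. x \<ge> 0 \<Longrightarrow> y \<ge> 0 \<Longrightarrow> dist x y / \<mu>2 - \<delta>2 \<le> dist (g x) (g y)"
    and up2: "\<And>x y. x \<ge> 0 \<Longrightarrow> y \<ge> 0 \<Longrightarrow> dist (g x) (g y) \<le> \<mu>2 * dist x y + \<delta>2"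
    and "x \<ge> 0" "y \<ge> 0"
  shows "dist x y / (\<mu>1 * \<mu>2) - (\<mu>1 * \<delta>2 + \<delta>1) \<le> dist (f (g x)) (f (g y))"
    and "dist (f (g x)) (f (g y)) \<le> \<mu>1 * \<mu>2 * dist x y + (\<mu>1 * \<delta>2 + \<delta>1)"
proof -
  have "dist x y / (\<mu>1 * \<mu>2) - \<delta>2 / \<mu>1 = (dist x y / \<mu>2 - \<delta>2) / \<mu>1"
    using assms(1,2) by (simp add: field_simps)
  also have "\<dots> \<le> dist (g x) (g y) / \<mu>1"
    using lo2[OF assms(9,10)] assms(1) by (simp add: divide_right_mono)
  also have "\<dots> \<le> dist (f (g x)) (f (g y)) + \<delta>1"
    using lo1[OF g0 g0] assms(9,10) by (simp add: algebra_simps)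
  finally have "dist x y / (\<mu>1 * \<mu>2) - \<delta>2 / \<mu>1 \<le> dist (f (g x)) (f (g y)) + \<delta>1" .
  moreover have \<delta>2_le: "\<delta>2 \<le> \<mu>1 * \<delta>2"
    using mult_right_mono[OF assms(1,3)] by simp
  moreover have "\<delta>2 / \<mu>1 \<le> \<delta>2"
    using \<delta>2_le assms(1) by (simp add: divide_le_eq mult.commute)
  ultimately show "dist x y / (\<mu>1 * \<mu>2) - (\<mu>1 * \<delta>2 + \<delta>1) \<le> dist (f (g x)) (f (g y))"
    by linarith
  have "dist (f (g x)) (f (g y)) \<le> \<mu>1 * dist (g x) (g y) + \<delta>1"
    using up1 g0 assms(9,10) by blast
  also have "\<dots> \<le> \<mu>1 * (\<mu>2 * dist x y + \<delta>2) + \<delta>1"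
    using up2[OF assms(9,10)] assms(1) by simp
  finally show "dist (f (g x)) (f (g y)) \<le> \<mu>1 * \<mu>2 * dist x y + (\<mu>1 * \<delta>2 + \<delta>1)"
    by (simp add: algebra_simps)
qed

lemma is_qi_comp:
  assumes "is_qi f" "is_qi g"
  shows "is_qi (f \<circ> g)"
proof -
  obtain \<mu>1 \<delta>1 M1 where \<mu>1: "\<mu>1 \<ge> 1" "\<delta>1 > 0" "M1 > 0" and f0: "\<And>x. x \<ge> 0 \<Longrightarrow> f x \<ge> 0"
    and lo1: "\<And>x y. x \<ge> 0 \<Longrightarrow> y \<ge> 0 \<Longrightarrow> dist x y / \<mu>1 - \<delta>1 \<le> dist (f x) (f y)"
    and up1: "\<And>x y. x \<ge> 0 \<Longrightarrow> y \<ge> 0 \<Longrightarrow> dist (f x) (f y) \<le> \<mu>1 * dist x y + \<delta>1"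
    and su1: "\<And>y. y \<ge> 0 \<Longrightarrow> \<exists>x\<ge>0. dist y (f x) \<le> M1"
    using is_qiE[OF assms(1)] by metis
  obtain \<mu>2 \<delta>2 M2 where \<mu>2: "\<mu>2 \<ge> 1" "\<delta>2 > 0" "M2 > 0" and g0: "\<And>x. x \<ge> 0 \<Longrightarrow> g x \<ge> 0"
    and lo2: "\<And>x y. x \<ge> 0 \<Longrightarrow> y \<ge> 0 \<Longrightarrow> dist x y / \<mu>2 - \<delta>2 \<le> dist (g x) (g y)"
    and up2: "\<And>x y. x \<ge> 0 \<Longrightarrow> y \<ge> 0 \<Longrightarrow> dist (g x) (g y) \<le> \<mu>2 * dist x y + \<delta>2"
    and su2: "\<And>y. y \<ge> 0 \<Longrightarrow> \<exists>x\<ge>0. dist y (g x) \<le> M2"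
    using is_qiE[OF assms(2)] by metis
  note bounds = qi_embedding_comp[of \<mu>1 \<mu>2 \<delta>2 g, OF \<mu>1(1) \<mu>2(1) _ g0 lo1 up1 lo2 up2]
  show ?thesis
  proof (rule is_qiI[of _ "\<mu>1 * \<mu>2" "\<mu>1 * \<delta>2 + \<delta>1" "M1 + \<mu>1 * M2 + \<delta>1"])
    fix y :: real assume "y \<ge> 0"
    then obtain x where x: "x \<ge> 0" "dist y (f x) \<le> M1" using su1 by blast
    then obtain z where z: "z \<ge> 0" "dist x (g z) \<le> M2" using su2 by blast
    have "dist (f x) (f (g z)) \<le> \<mu>1 * M2 + \<delta>1"
      using up1[OF x(1) g0[OF z(1)]] z(2) \<mu>1 by (smt (verit) mult_left_mono)
    then have "dist y (f (g z)) \<le> M1 + \<mu>1 * M2 + \<delta>1"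
      using x(2) dist_triangle[of y "f (g z)" "f x"] by linarith
    with z(1) show "\<exists>x\<ge>0. dist y ((f \<circ> g) x) \<le> M1 + \<mu>1 * M2 + \<delta>1"
      by auto
  next
    show "1 \<le> \<mu>1 * \<mu>2" using \<mu>1 \<mu>2 mult_mono[of 1 \<mu>1 1 \<mu>2] by simp
    show "rplus_map (f \<circ> g)" using f0 g0 by (simp add: rplus_map_def)
    show "0 < \<mu>1 * \<delta>2 + \<delta>1" using \<mu>1 \<mu>2 by (intro add_pos_pos mult_pos_pos) auto
    show "0 < M1 + \<mu>1 * M2 + \<delta>1" using \<mu>1 \<mu>2 by (intro add_pos_pos mult_pos_pos) auto
  qed (use bounds \<mu>2 in auto)
qed

lemma coarse_inverse_qi_equiv_id:
  assumes "is_qi f" and h: "\<And>y. y \<ge> 0 \<Longrightarrow> h y \<ge> 0 \<and> dist y (f (h y)) \<le> M"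
  shows "qi_equiv (h \<circ> f) id"
proof -
  obtain \<mu> \<delta> M' where \<mu>: "\<mu> \<ge> 1" and f0: "\<And>x. x \<ge> 0 \<Longrightarrow> f x \<ge> 0"
    and lower: "\<And>x y. x \<ge> 0 \<Longrightarrow> y \<ge> 0 \<Longrightarrow> dist x y / \<mu> - \<delta> \<le> dist (f x) (f y)"
    using is_qiE[OF assms(1)] by metis
  have "dist (h (f x)) x \<le> \<mu> * (M + \<delta>)" if "x \<ge> 0" for x
  proof -
    have "dist x (h (f x)) / \<mu> \<le> M + \<delta>"
      using lower[OF that, of "h (f x)"] h[OF f0[OF that]] by linarith
    then show ?thesis
      using \<mu> by (simp add: divide_le_eq algebra_simps dist_commute)
  qed
  then show ?thesis
    unfolding qi_equiv_def by auto
qed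

lemma is_qi_coarse_inverse:
  assumes "is_qi f" and h: "\<And>y. y \<ge> 0 \<Longrightarrow> h y \<ge> 0 \<and> dist y (f (h y)) \<le> M"
  shows "is_qi h"
proof -
  obtain \<mu> \<delta> M' where \<mu>: "\<mu> \<ge> 1" and \<delta>: "\<delta> > 0" and f0: "\<And>x. x \<ge> 0 \<Longrightarrow> f x \<ge> 0"
    and lower: "\<And>x y. x \<ge> 0 \<Longrightarrow> y \<ge> 0 \<Longrightarrow> dist x y / \<mu> - \<delta> \<le> dist (f x) (f y)"
    and upper: "\<And>x y. x \<ge> 0 \<Longrightarrow> y \<ge> 0 \<Longrightarrow> dist (f x) (f y) \<le> \<mu> * dist x y + \<delta>"
    using is_qiE[OF assms(1)] by metis
  obtain C where C: "\<And>x. x \<ge> 0 \<Longrightarrow> dist (h (f x)) x \<le> C"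
    using coarse_inverse_qi_equiv_id[OF assms] unfolding qi_equiv_def by auto
  have M: "M \<ge> 0"
    using h[of 0] zero_le_dist order_trans by fastforce
  show "is_qi h"
  proof (rule is_qiI[of _ \<mu> "\<mu> * (2 * M + \<delta>)" "\<bar>C\<bar> + 1"])
    fix y y' :: real assume "y \<ge> 0" "y' \<ge> 0"
    note hy = h[OF this(1)] and hy' = h[OF this(2)]
    have "dist y y' \<le> dist (f (h y)) (f (h y')) + 2 * M"
      using hy hy' dist_triangle[of y y' "f (h y)"] dist_triangle[of "f (h y)" y' "f (h y')"]
      by (simp add: dist_commute)
    also have "\<dots> \<le> \<mu> * dist (h y) (h y') + (\<delta> + 2 * M)"
      using upper[of "h y" "h y'"] hy hy' by linarith
    finally have "dist y y' / \<mu> \<le> (\<mu> * dist (h y) (h y') + (\<delta> + 2 * M)) / \<mu>"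
      using \<mu> by (simp add: divide_right_mono)
    also have "\<dots> = dist (h y) (h y') + (\<delta> + 2 * M) / \<mu>"
      using \<mu> by (simp add: field_simps)
    finally have "dist y y' / \<mu> \<le> dist (h y) (h y') + (\<delta> + 2 * M) / \<mu>" .
    moreover have "(\<delta> + 2 * M) / \<mu> \<le> \<delta> + 2 * M"
      using divide_left_mono[of 1 \<mu> "\<delta> + 2 * M"] \<mu> \<delta> M by simp
    moreover have "2 * M + \<delta> \<le> \<mu> * (2 * M + \<delta>)"
      using mult_right_mono[of 1 \<mu> "2 * M + \<delta>"] \<mu> \<delta> M by simp
    ultimately show "dist y y' / \<mu> - \<mu> * (2 * M + \<delta>) \<le> dist (h y) (h y')"
      by linarith
    have "dist (f (h y)) (f (h y')) \<le> dist y y' + 2 * M"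
      using hy hy' dist_triangle[of "f (h y)" "f (h y')" y] dist_triangle[of y "f (h y')" y']
      by (simp add: dist_commute)
    then have "dist (h y) (h y') / \<mu> \<le> dist y y' + 2 * M + \<delta>"
      using lower[of "h y" "h y'"] hy hy' by linarith
    then show "dist (h y) (h y') \<le> \<mu> * dist y y' + \<mu> * (2 * M + \<delta>)"
      using \<mu> by (simp add: divide_le_eq algebra_simps)
  next
    fix x :: real assume "x \<ge> 0"
    then show "\<exists>y\<ge>0. dist x (h y) \<le> \<bar>C\<bar> + 1"
      using C[of x] f0[of x] by (auto simp: dist_commute)
  next
    show "rplus_map h" using h by (simp add: rplus_map_def)
    show "0 < \<mu> * (2 * M + \<delta>)"
      using \<mu> \<delta> M by (simp add: add_nonneg_pos)
  qed (use \<mu> in simp_all)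
qed

lemma is_qi_quasi_inverse:
  assumes "is_qi f"
  obtains h where "is_qi h" "qi_equiv (h \<circ> f) id" "qi_equiv (f \<circ> h) id"
proof -
  obtain M where "\<And>y. y \<ge> 0 \<Longrightarrow> \<exists>x\<ge>0. dist y (f x) \<le> M"
    using is_qiE[OF assms] by metis
  then have "\<forall>y. \<exists>x. y \<ge> 0 \<longrightarrow> x \<ge> 0 \<and> dist y (f x) \<le> M"
    by blast
  from choice[OF this] obtain h where h: "\<And>y. y \<ge> 0 \<Longrightarrow> h y \<ge> 0 \<and> dist y (f (h y)) \<le> M"
    by blast
  have "qi_equiv (f \<circ> h) id"
    unfolding qi_equiv_def using h by (auto simp: dist_commute)
  with is_qi_coarse_inverse[OF assms h] coarse_inverse_qi_equiv_id[OF assms h] show ?thesis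
    by (rule that)
qed

lemma qi_equiv_comp:
  assumes "is_qi f" "qi_equiv f f'" "qi_equiv g g'" "rplus_map g" "rplus_map g'"
  shows "qi_equiv (f \<circ> g) (f' \<circ> g')"
proof -
  obtain \<mu> \<delta> M where \<mu>: "\<mu> \<ge> 1"
    and upper: "\<And>x y. x \<ge> 0 \<Longrightarrow> y \<ge> 0 \<Longrightarrow> dist (f x) (f y) \<le> \<mu> * dist x y + \<delta>"
    using is_qiE[OF assms(1)] by metis
  obtain C where C: "\<And>x. x \<ge> 0 \<Longrightarrow> dist (f x) (f' x) \<le> C"
    using assms(2) unfolding qi_equiv_def by blast
  obtain D where D: "\<And>x. x \<ge> 0 \<Longrightarrow> dist (g x) (g' x) \<le> D"
    using assms(3) unfolding qi_equiv_def by blast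
  have "dist (f (g x)) (f' (g' x)) \<le> \<mu> * D + \<delta> + C" if "x \<ge> 0" for x
  proof -
    have g: "g x \<ge> 0" "g' x \<ge> 0"
      using assms(4,5) that by (auto simp: rplus_map_def)
    have "dist (f (g x)) (f (g' x)) \<le> \<mu> * D + \<delta>"
      using upper[OF g] mult_left_mono[OF D[OF that], of \<mu>] \<mu> by linarith
    moreover have "dist (f (g' x)) (f' (g' x)) \<le> C"
      using C[OF g(2)] .
    ultimately show ?thesis
      using dist_triangle[of "f (g x)" "f' (g' x)" "f (g' x)"] by linarith
  qed
  then show ?thesis
    unfolding qi_equiv_def by auto
qed

lemma bump_is_qi:
  fixes S :: "real set"
  assumes "0 \<in> S"
  shows "is_qi (\<lambda>x. x + infdist x S / 2)"
proof (rule is_qiI[of _ 2 1 1])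
  fix x y :: real
  have lip: "\<bar>infdist x S - infdist y S\<bar> \<le> \<bar>x - y\<bar>"
    using infdist_triangle_abs[of x S y] by (simp add: dist_real_def)
  show "dist x y / 2 - 1 \<le> dist (x + infdist x S / 2) (y + infdist y S / 2)"
    using lip unfolding dist_real_def by (auto simp: abs_if field_simps split: if_splits)
  show "dist (x + infdist x S / 2) (y + infdist y S / 2) \<le> 2 * dist x y + 1"
    using lip unfolding dist_real_def by (auto simp: abs_if field_simps split: if_splits)
next
  fix y :: real assume "y \<ge> 0"
  have "continuous_on {0..y} (\<lambda>x. x + infdist x S / 2)"
    by (intro continuous_intros) auto
  moreover have "0 + infdist 0 S / 2 \<le> y" "y \<le> y + infdist y S / 2"
    using assms \<open>y \<ge> 0\<close> infdist_nonneg[of y S] by auto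
  ultimately obtain x where "0 \<le> x" "x + infdist x S / 2 = y"
    using IVT'[of "\<lambda>x. x + infdist x S / 2" 0 y y] \<open>y \<ge> 0\<close> by auto
  then show "\<exists>x\<ge>0. dist y (x + infdist x S / 2) \<le> 1"
    by (intro exI[of _ x]) auto
next
  show "rplus_map (\<lambda>x. x + infdist x S / 2)"
    unfolding rplus_map_def by (intro allI impI add_nonneg_nonneg) (simp_all add: infdist_nonneg)
qed simp_all

section \<open>The group QI(R+)\<close>

lemma carrier_QI_Rplus: "carrier QI_Rplus = qi_class ` {f. is_qi f}"
  by (simp add: QI_Rplus_def)

lemma one_QI_Rplus: "\<one>\<^bsub>QI_Rplus\<^esub> = qi_class id"
  by (simp add: QI_Rplus_def)

lemma mult_QI_Rplus:
  assumes "is_qi f" "is_qi g"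
  shows "qi_class f \<otimes>\<^bsub>QI_Rplus\<^esub> qi_class g = qi_class (f \<circ> g)"
proof -
  let ?f = "SOME h. h \<in> qi_class f" and ?g = "SOME h. h \<in> qi_class g"
  have "qi_equiv (f \<circ> g) (?f \<circ> ?g)"
    using assms some_mem_qi_class is_qi_rplus_map by (intro qi_equiv_comp) auto
  then show ?thesis
    unfolding QI_Rplus_def by (simp add: qi_class_eqI)
qed

lemma group_QI_Rplus: "group QI_Rplus"
proof (rule groupI)
  fix x y assume "x \<in> carrier QI_Rplus" "y \<in> carrier QI_Rplus"
  then show "x \<otimes>\<^bsub>QI_Rplus\<^esub> y \<in> carrier QI_Rplus"
    by (auto simp: carrier_QI_Rplus mult_QI_Rplus is_qi_comp)
next
  show "\<one>\<^bsub>QI_Rplus\<^esub> \<in> carrier QI_Rplus"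
    by (simp add: one_QI_Rplus carrier_QI_Rplus is_qi_id)
next
  fix x y z assume "x \<in> carrier QI_Rplus" "y \<in> carrier QI_Rplus" "z \<in> carrier QI_Rplus"
  then show "x \<otimes>\<^bsub>QI_Rplus\<^esub> y \<otimes>\<^bsub>QI_Rplus\<^esub> z = x \<otimes>\<^bsub>QI_Rplus\<^esub> (y \<otimes>\<^bsub>QI_Rplus\<^esub> z)"
    by (auto simp: carrier_QI_Rplus mult_QI_Rplus is_qi_comp o_assoc)
next
  fix x assume "x \<in> carrier QI_Rplus"
  then show "\<one>\<^bsub>QI_Rplus\<^esub> \<otimes>\<^bsub>QI_Rplus\<^esub> x = x"
    by (auto simp: carrier_QI_Rplus one_QI_Rplus mult_QI_Rplus is_qi_id)
next
  fix x assume "x \<in> carrier QI_Rplus"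
  then obtain f where f: "is_qi f" "x = qi_class f"
    by (auto simp: carrier_QI_Rplus)
  then obtain h where h: "is_qi h" "qi_equiv (h \<circ> f) id"
    using is_qi_quasi_inverse by metis
  then have "qi_class h \<otimes>\<^bsub>QI_Rplus\<^esub> x = \<one>\<^bsub>QI_Rplus\<^esub>"
    using f by (simp add: mult_QI_Rplus one_QI_Rplus qi_class_eqI)
  moreover have "qi_class h \<in> carrier QI_Rplus"
    using h by (simp add: carrier_QI_Rplus)
  ultimately show "\<exists>y\<in>carrier QI_Rplus. y \<otimes>\<^bsub>QI_Rplus\<^esub> x = \<one>\<^bsub>QI_Rplus\<^esub>"
    by blast
qed

lemma inv_QI_Rplus:
  assumes "is_qi f" "is_qi h" "qi_equiv (h \<circ> f) id"
  shows "inv\<^bsub>QI_Rplus\<^esub> (qi_class f) = qi_class h"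
proof (rule group.inv_equality[OF group_QI_Rplus])
  show "qi_class h \<otimes>\<^bsub>QI_Rplus\<^esub> qi_class f = \<one>\<^bsub>QI_Rplus\<^esub>"
    using assms by (simp add: mult_QI_Rplus one_QI_Rplus qi_class_eqI)
qed (use assms in \<open>simp_all add: carrier_QI_Rplus\<close>)

section \<open>Maps asymptotic to the identity\<close>

lemma tendsto_ratio_iff_asymp_equiv_id:
  fixes f :: "real \<Rightarrow> real"
  shows "((\<lambda>x. f x / x) \<longlongrightarrow> 1) at_top \<longleftrightarrow> f \<sim>[at_top] (\<lambda>x. x)"
proof
  assume "((\<lambda>x. f x / x) \<longlongrightarrow> 1) at_top"
  then show "f \<sim>[at_top] (\<lambda>x. x)" by (rule asymp_equivI')
next
  assume "f \<sim>[at_top] (\<lambda>x. x)"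
  moreover have "eventually (\<lambda>x::real. f x \<noteq> 0 \<or> x \<noteq> 0) at_top"
    using eventually_gt_at_top[of 0] by eventually_elim simp
  ultimately show "((\<lambda>x. f x / x) \<longlongrightarrow> 1) at_top" by (rule asymp_equivD_strong)
qed

lemma asymp_equiv_id_filterlim_at_top:
  fixes f :: "real \<Rightarrow> real"
  assumes "f \<sim>[at_top] (\<lambda>x. x)"
  shows "filterlim f at_top at_top"
  using asymp_equiv_symI[OF assms] filterlim_ident by (rule asymp_equiv_at_top_transfer)

lemma asymp_equiv_id_qi_equiv:
  fixes f g :: "real \<Rightarrow> real"
  assumes "f \<sim>[at_top] (\<lambda>x. x)" and "qi_equiv f g"
  shows "g \<sim>[at_top] (\<lambda>x. x)"
  unfolding asymp_equiv_altdef
proof (rule landau_o.smallI)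
  fix c :: real assume c: "c > 0"
  obtain C where C: "\<And>x. x \<ge> 0 \<Longrightarrow> dist (f x) (g x) \<le> C"
    using assms(2) unfolding qi_equiv_def by blast
  have "eventually (\<lambda>x. norm (f x - x) \<le> c / 2 * norm x) at_top"
    using assms(1) c unfolding asymp_equiv_altdef by (intro landau_o.smallD) auto
  moreover have "eventually (\<lambda>x. max 0 (2 * C / c) \<le> x) at_top"
    by (rule eventually_ge_at_top)
  ultimately show "eventually (\<lambda>x. norm (g x - x) \<le> c * norm x) at_top"
  proof eventually_elim
    case (elim x)
    then have "x \<ge> 0" "2 * C \<le> c * x"
      using c by (auto simp: pos_divide_le_eq mult.commute)
    moreover have "\<bar>f x - g x\<bar> \<le> C"
      using C[OF \<open>x \<ge> 0\<close>] by (simp add: dist_real_def)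
    moreover have "\<bar>f x - x\<bar> \<le> c / 2 * x"
      using elim(1) \<open>x \<ge> 0\<close> by simp
    ultimately have "\<bar>g x - x\<bar> \<le> c * x"
      by linarith
    then show ?case
      using \<open>x \<ge> 0\<close> by simp
  qed
qed

lemma id_asymp_equiv_id: "id \<sim>[at_top] (\<lambda>x::real. x)"
  by (simp add: id_def)

lemma is_qi_filterlim_at_top:
  assumes "is_qi f"
  shows "filterlim f at_top at_top"
proof -
  obtain \<mu> c where \<mu>: "\<mu> \<ge> 1" and bounds: "\<And>x. x \<ge> 0 \<Longrightarrow> x / \<mu> - c \<le> f x \<and> f x \<le> \<mu> * x + c"
    using is_qi_linear_bounds[OF assms] by blast
  have "filterlim (\<lambda>x. x / \<mu> - c) at_top at_top"
    using \<mu> by real_asymp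
  moreover have "eventually (\<lambda>x. x / \<mu> - c \<le> f x) at_top"
    using eventually_ge_at_top[of 0] by eventually_elim (use bounds in blast)
  ultimately show ?thesis by (rule filterlim_at_top_mono)
qed

lemma is_qi_bigo_id:
  assumes "is_qi f"
  shows "f \<in> O[at_top](\<lambda>x. x)"
proof -
  obtain \<mu> c where \<mu>: "\<mu> \<ge> 1" "c \<ge> 0" and bounds: "\<And>x. x \<ge> 0 \<Longrightarrow> x / \<mu> - c \<le> f x \<and> f x \<le> \<mu> * x + c"
    using is_qi_linear_bounds[OF assms] by blast
  have "eventually (\<lambda>x. norm (f x) \<le> (\<mu> + c) * norm x) at_top"
    using eventually_ge_at_top[of 1]
  proof eventually_elim
    case (elim x)
    have "f x \<ge> 0" "f x \<le> \<mu> * x + c"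
      using bounds[of x] is_qi_nonneg[OF assms, of x] elim by auto
    moreover have "c \<le> c * x"
      using \<mu> elim mult_left_mono[of 1 x c] by simp
    ultimately show ?case
      using elim by (simp add: algebra_simps)
  qed
  then show ?thesis
    using \<mu> by (intro landau_o.bigI[of "\<mu> + c"]) auto
qed

lemma is_qi_id_bigo:
  assumes "is_qi f"
  shows "(\<lambda>x. x) \<in> O[at_top](f)"
proof -
  obtain \<mu> c where \<mu>: "\<mu> \<ge> 1" "c \<ge> 0" and bounds: "\<And>x. x \<ge> 0 \<Longrightarrow> x / \<mu> - c \<le> f x \<and> f x \<le> \<mu> * x + c"
    using is_qi_linear_bounds[OF assms] by blast
  have "eventually (\<lambda>x. norm x \<le> (2 * \<mu>) * norm (f x)) at_top"
    using eventually_ge_at_top[of "2 * \<mu> * c"]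
  proof eventually_elim
    case (elim x)
    then have "x \<ge> 0" "c \<le> x / (2 * \<mu>)"
      using \<mu> by (auto simp: pos_le_divide_eq mult.commute intro: order_trans[OF _ elim])
    then have "x / (2 * \<mu>) \<le> f x"
      using bounds[of x] by (simp add: field_simps)
    then show ?case
      using \<mu> \<open>x \<ge> 0\<close> is_qi_nonneg[OF assms \<open>x \<ge> 0\<close>]
      by (simp add: pos_divide_le_eq mult.commute)
  qed
  then show ?thesis
    using \<mu> by (intro landau_o.bigI[of "2 * \<mu>"]) auto
qed

lemma is_qi_comp_asymp_equiv_id:
  assumes "is_qi g" and "f \<sim>[at_top] (\<lambda>x. x)"
  shows "(\<lambda>x. g (f x)) \<sim>[at_top] g"
  unfolding asymp_equiv_altdef
proof (rule landau_o.small_big_trans[OF _ is_qi_id_bigo[OF assms(1)]], rule landau_o.smallI)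
  fix c :: real assume c: "c > 0"
  obtain \<mu> \<delta> M where \<mu>: "\<mu> \<ge> 1" and \<delta>: "\<delta> > 0"
    and upper: "\<And>x y. x \<ge> 0 \<Longrightarrow> y \<ge> 0 \<Longrightarrow> dist (g x) (g y) \<le> \<mu> * dist x y + \<delta>"
    using is_qiE[OF assms(1)] by metis
  have "eventually (\<lambda>x. norm (f x - x) \<le> c / (2 * \<mu>) * norm x) at_top"
    using assms(2) c \<mu> unfolding asymp_equiv_altdef by (intro landau_o.smallD) auto
  moreover have "eventually (\<lambda>x. f x \<ge> 0) at_top"
    using asymp_equiv_id_filterlim_at_top[OF assms(2)] by (simp add: filterlim_at_top)
  moreover have "eventually (\<lambda>x. max 0 (2 * \<delta> / c) \<le> x) at_top"
    by (rule eventually_ge_at_top)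
  ultimately show "eventually (\<lambda>x. norm (g (f x) - g x) \<le> c * norm x) at_top"
  proof eventually_elim
    case (elim x)
    then have x: "x \<ge> 0" "2 * \<delta> \<le> c * x"
      using c by (auto simp: pos_divide_le_eq mult.commute)
    have "\<mu> * \<bar>f x - x\<bar> \<le> c / 2 * x"
      using elim(1) x \<mu> by (simp add: field_simps)
    moreover have "\<bar>g (f x) - g x\<bar> \<le> \<mu> * \<bar>f x - x\<bar> + \<delta>"
      using upper[OF elim(2) x(1)] by (simp add: dist_real_def)
    ultimately have "\<bar>g (f x) - g x\<bar> \<le> c * x"
      using x by linarith
    then show ?case
      using x by simp
  qed
qed

lemma asymp_equiv_id_comp:
  fixes f g :: "real \<Rightarrow> real"
  assumes "f \<sim>[at_top] (\<lambda>x. x)" and "g \<sim>[at_top] (\<lambda>x. x)"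
  shows "(f \<circ> g) \<sim>[at_top] (\<lambda>x. x)"
proof -
  have "(\<lambda>x. f (g x)) \<sim>[at_top] (\<lambda>x. g x)"
    using assms(1) asymp_equiv_id_filterlim_at_top[OF assms(2)] by (rule asymp_equiv_compose')
  from asymp_equiv_trans[OF this assms(2)] show ?thesis
    by (simp add: comp_def)
qed

lemma asymp_equiv_id_quasi_inverse:
  assumes "f \<sim>[at_top] (\<lambda>x. x)" and "is_qi h" and "qi_equiv (f \<circ> h) id"
  shows "h \<sim>[at_top] (\<lambda>x. x)"
proof -
  have "(\<lambda>x. f (h x)) \<sim>[at_top] (\<lambda>x. h x)"
    using assms(1) is_qi_filterlim_at_top[OF assms(2)] by (rule asymp_equiv_compose')
  moreover have "(\<lambda>x. f (h x)) \<sim>[at_top] (\<lambda>x. x)"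
    using asymp_equiv_id_qi_equiv[OF id_asymp_equiv_id qi_equiv_sym[OF assms(3)]]
    by (simp add: comp_def)
  ultimately show ?thesis
    by (metis asymp_equiv_sym asymp_equiv_trans)
qed

lemma asymp_equiv_id_conj:
  assumes "f \<sim>[at_top] (\<lambda>x. x)" and "is_qi g" "is_qi k" and "qi_equiv (g \<circ> k) id"
  shows "(g \<circ> f \<circ> k) \<sim>[at_top] (\<lambda>x. x)"
proof -
  have "(\<lambda>x. g (f (k x))) \<sim>[at_top] (\<lambda>x. g (k x))"
    using is_qi_comp_asymp_equiv_id[OF assms(2,1)] is_qi_filterlim_at_top[OF assms(3)]
    by (rule asymp_equiv_compose')
  moreover have "(\<lambda>x. g (k x)) \<sim>[at_top] (\<lambda>x. x)"
    using asymp_equiv_id_qi_equiv[OF id_asymp_equiv_id qi_equiv_sym[OF assms(4)]]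
    by (simp add: comp_def)
  ultimately show ?thesis
    unfolding comp_def by (rule asymp_equiv_trans)
qed

lemma N_Rplus_altdef: "N_Rplus = {qi_class f |f. is_qi f \<and> f \<sim>[at_top] (\<lambda>x. x)}"
  unfolding N_Rplus_def tendsto_ratio_iff_asymp_equiv_id ..

lemma qi_class_in_N_Rplus_iff:
  assumes "is_qi f"
  shows "qi_class f \<in> N_Rplus \<longleftrightarrow> f \<sim>[at_top] (\<lambda>x. x)"
proof
  assume "qi_class f \<in> N_Rplus"
  then obtain f' where f': "f' \<sim>[at_top] (\<lambda>x. x)" "qi_class f = qi_class f'"
    unfolding N_Rplus_altdef by blast
  have "f \<in> qi_class f'"
    using f'(2) qi_class_self[OF is_qi_rplus_map[OF assms]] by simp
  then show "f \<sim>[at_top] (\<lambda>x. x)"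
    using f'(1) asymp_equiv_id_qi_equiv by (auto simp: mem_qi_class_iff)
qed (use assms in \<open>auto simp: N_Rplus_altdef\<close>)

lemma N_Rplus_normal: "N_Rplus \<lhd> QI_Rplus"
proof -
  interpret group QI_Rplus
    by (rule group_QI_Rplus)
  have subgroup: "subgroup N_Rplus QI_Rplus"
  proof (rule subgroupI)
    show "N_Rplus \<subseteq> carrier QI_Rplus"
      by (auto simp: N_Rplus_altdef carrier_QI_Rplus)
    show "N_Rplus \<noteq> {}"
      using is_qi_id id_asymp_equiv_id by (auto simp: N_Rplus_altdef)
  next
    fix a assume "a \<in> N_Rplus"
    then obtain f where f: "is_qi f" "f \<sim>[at_top] (\<lambda>x. x)" "a = qi_class f"
      by (auto simp: N_Rplus_altdef)
    obtain h where h: "is_qi h" "qi_equiv (h \<circ> f) id" "qi_equiv (f \<circ> h) id"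
      using is_qi_quasi_inverse[OF f(1)] by metis
    show "inv\<^bsub>QI_Rplus\<^esub> a \<in> N_Rplus"
      using f h inv_QI_Rplus asymp_equiv_id_quasi_inverse by (auto simp: qi_class_in_N_Rplus_iff)
  next
    fix a b assume "a \<in> N_Rplus" "b \<in> N_Rplus"
    then show "a \<otimes>\<^bsub>QI_Rplus\<^esub> b \<in> N_Rplus"
      by (auto simp: N_Rplus_altdef mult_QI_Rplus is_qi_comp asymp_equiv_id_comp)
  qed
  show ?thesis
  proof (subst normal_inv_iff, intro conjI subgroup ballI)
    fix x n assume "x \<in> carrier QI_Rplus" "n \<in> N_Rplus"
    then obtain g f where g: "is_qi g" "x = qi_class g"
      and f: "is_qi f" "f \<sim>[at_top] (\<lambda>x. x)" "n = qi_class f"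
      by (auto simp: carrier_QI_Rplus N_Rplus_altdef)
    obtain k where k: "is_qi k" "qi_equiv (k \<circ> g) id" "qi_equiv (g \<circ> k) id"
      using is_qi_quasi_inverse[OF g(1)] by metis
    have "x \<otimes>\<^bsub>QI_Rplus\<^esub> n \<otimes>\<^bsub>QI_Rplus\<^esub> inv\<^bsub>QI_Rplus\<^esub> x = qi_class (g \<circ> f \<circ> k)"
      using f g k by (simp add: inv_QI_Rplus mult_QI_Rplus is_qi_comp)
    then show "x \<otimes>\<^bsub>QI_Rplus\<^esub> n \<otimes>\<^bsub>QI_Rplus\<^esub> inv\<^bsub>QI_Rplus\<^esub> x \<in> N_Rplus"
      using f g k asymp_equiv_id_conj by (simp add: qi_class_in_N_Rplus_iff is_qi_comp)
  qed
qed

section \<open>The centre of the quotient\<close>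

lemma (in normal) group_center_FactGroup_eq_oneI:
  assumes "\<And>a. a \<in> carrier G \<Longrightarrow> (\<And>b. b \<in> carrier G \<Longrightarrow> a \<otimes> b \<in> H #> (b \<otimes> a)) \<Longrightarrow> a \<in> H"
  shows "group_center (G Mod H) = {\<one>\<^bsub>G Mod H\<^esub>}"
proof
  interpret Mod: group "G Mod H"
    by (rule factorgroup_is_group)
  show "{\<one>\<^bsub>G Mod H\<^esub>} \<subseteq> group_center (G Mod H)"
    by (simp add: group_center_def del: one_FactGroup mult_FactGroup)
  show "group_center (G Mod H) \<subseteq> {\<one>\<^bsub>G Mod H\<^esub>}"
  proof
    fix z assume z: "z \<in> group_center (G Mod H)"
    then obtain a where a: "a \<in> carrier G" "z = H #> a"
      by (auto simp: group_center_def carrier_FactGroup)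
    have "a \<in> H"
    proof (rule assms[OF a(1)])
      fix b assume b: "b \<in> carrier G"
      have "H #> b \<in> carrier (G Mod H)"
        using b by (simp add: carrier_FactGroup)
      then have "(H #> a) <#> (H #> b) = (H #> b) <#> (H #> a)"
        using z a(2) by (simp add: group_center_def)
      then have "H #> (a \<otimes> b) = H #> (b \<otimes> a)"
        using a(1) b by (simp add: rcos_sum)
      then show "a \<otimes> b \<in> H #> (b \<otimes> a)"
        using rcos_self[OF m_closed[OF a(1) b] subgroup_axioms] by simp
    qed
    then show "z \<in> {\<one>\<^bsub>G Mod H\<^esub>}"
      using a(2) rcos_const[OF is_group] by simp
  qed
qed

lemma frequently_at_top_sparse_sequence:
  fixes P :: "real \<Rightarrow> bool"
  assumes "frequently P at_top" and "B \<ge> 1"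
  obtains xs where "\<And>n. P (xs n)" "\<And>n. xs n \<ge> 1" "\<And>m n. m < n \<Longrightarrow> B * xs m \<le> xs n"
    and "filterlim xs at_top sequentially"
proof -
  have witness: "\<exists>x\<ge>K. P x" for K
    using assms(1) by (auto simp: frequently_def eventually_at_top_linorder)
  have "\<exists>xs. \<forall>n. (P (xs n) \<and> max 1 (real n) \<le> xs n) \<and> B * xs n \<le> xs (Suc n)"
  proof (rule dependent_nat_choice)
    show "\<exists>x. P x \<and> max 1 (real 0) \<le> x"
      using witness[of 1] by auto
    fix x n assume "P x \<and> max 1 (real n) \<le> x"
    show "\<exists>y. (P y \<and> max 1 (real (Suc n)) \<le> y) \<and> B * x \<le> y"
      using witness[of "max (B * x) (max 1 (real (Suc n)))"] by auto
  qed
  then obtain xs where P: "\<And>n. P (xs n)" and ge: "\<And>n. max 1 (real n) \<le> xs n"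
    and step: "\<And>n. B * xs n \<le> xs (Suc n)"
    by blast
  have "xs n \<le> xs (Suc n)" for n
  proof -
    have "1 * xs n \<le> B * xs n"
      using assms(2) ge[of n] by (intro mult_right_mono) auto
    then show ?thesis
      using step[of n] by simp
  qed
  then have mono: "m \<le> n \<Longrightarrow> xs m \<le> xs n" for m n
    by (rule lift_Suc_mono_le)
  show ?thesis
  proof (rule that[OF P])
    show "xs n \<ge> 1" for n
      using ge[of n] by simp
    show "B * xs m \<le> xs n" if "m < n" for m n
      using step[of m] mono[of "Suc m" n] that by simp
    show "filterlim xs at_top sequentially"
      using filterlim_real_sequentially by (rule filterlim_at_top_mono) (use ge in auto)
  qed
qed

text \<open>The sparseness factor puts f(x_m) below x_n/2 for m < n and above 2 x_n for m > n.\<close>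

lemma dist_sparse_image_ge:
  fixes f :: "real \<Rightarrow> real" and xs :: "nat \<Rightarrow> real"
  assumes bounds: "\<And>x. x \<ge> 0 \<Longrightarrow> x / \<mu> - c \<le> f x \<and> f x \<le> \<mu> * x + c"
    and "\<mu> \<ge> 1" "c \<ge> 0" and xs_ge: "\<And>n. xs n \<ge> 1"
    and sparse: "\<And>m n. m < n \<Longrightarrow> (2 * (\<mu> + c) + \<mu> * (2 + c)) * xs m \<le> xs n"
    and "m \<noteq> n"
  shows "xs n / 2 \<le> dist (xs n) (f (xs m))"
proof -
  have cx: "c \<le> c * xs k" for k
    using mult_left_mono[OF xs_ge[of k] assms(3)] by simp
  consider "m < n" | "n < m"
    using \<open>m \<noteq> n\<close> by linarith
  then show ?thesis
  proof cases
    case 1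
    have "0 \<le> \<mu> * (2 + c) * xs m"
      using xs_ge[of m] assms(2,3) by simp
    then have "2 * ((\<mu> + c) * xs m) \<le> xs n"
      using sparse[OF 1] by (simp add: algebra_simps)
    moreover have "f (xs m) \<le> (\<mu> + c) * xs m"
      using bounds[of "xs m"] xs_ge[of m] cx[of m] by (simp add: algebra_simps)
    ultimately have "xs n / 2 \<le> xs n - f (xs m)"
      by linarith
    then show ?thesis
      unfolding dist_real_def using abs_ge_self order_trans by blast
  next
    case 2
    have "0 \<le> 2 * (\<mu> + c) * xs n"
      using xs_ge[of n] assms(2,3) by simp
    then have "\<mu> * ((2 + c) * xs n) \<le> xs m"
      using sparse[OF 2] by (simp add: algebra_simps)
    then have "(2 + c) * xs n \<le> xs m / \<mu>"
      using assms(2) by (simp add: pos_le_divide_eq mult.commute)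
    then have "2 * xs n \<le> f (xs m)"
      using bounds[of "xs m"] xs_ge[of m] cx[of n] by (simp add: algebra_simps)
    then have "xs n / 2 \<le> f (xs m) - xs n"
      using xs_ge[of n] by linarith
    then show ?thesis
      unfolding dist_real_def using abs_minus_commute abs_ge_self order_trans by metis
  qed
qed

lemma infdist_sparse_image_ge:
  fixes f :: "real \<Rightarrow> real" and xs :: "nat \<Rightarrow> real"
  assumes bounds: "\<And>x. x \<ge> 0 \<Longrightarrow> x / \<mu> - c \<le> f x \<and> f x \<le> \<mu> * x + c"
    and "\<mu> \<ge> 1" "c \<ge> 0" "e \<le> 1 / 2"
    and xs_ge: "\<And>n. xs n \<ge> 1" and moved: "\<And>n. e * xs n < \<bar>f (xs n) - xs n\<bar>"
    and sparse: "\<And>m n. m < n \<Longrightarrow> (2 * (\<mu> + c) + \<mu> * (2 + c)) * xs m \<le> xs n"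
  shows "e * xs n \<le> infdist (xs n) (insert 0 (range (\<lambda>m. f (xs m))))"
proof (subst infdist_notempty, simp, rule cINF_greatest, simp)
  have x: "xs n \<ge> 1" "e * xs n \<le> xs n / 2"
    using xs_ge[of n] assms(4) mult_right_mono[of e "1/2" "xs n"] by auto
  fix s assume "s \<in> insert 0 (range (\<lambda>m. f (xs m)))"
  then consider "s = 0" | "s = f (xs n)" | m where "m \<noteq> n" "s = f (xs m)"
    by (metis insertE rangeE)
  then show "e * xs n \<le> dist (xs n) s"
  proof cases
    case 1
    then show ?thesis using x by (simp add: dist_real_def)
  next
    case 2
    then show ?thesis using moved[of n] by (simp add: dist_real_def abs_minus_commute)
  next
    case 3
    then show ?thesis
      using dist_sparse_image_ge[where xs = xs, OF bounds assms(2,3) xs_ge sparse \<open>m \<noteq> n\<close>] x(2)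
      by simp
  qed
qed

lemma not_asymp_equiv_id_frequently:
  fixes f :: "real \<Rightarrow> real"
  assumes "\<not> f \<sim>[at_top] (\<lambda>x. x)"
  obtains e where "e > 0" "e \<le> 1 / 2" "frequently (\<lambda>x. e * \<bar>x\<bar> < \<bar>f x - x\<bar>) at_top"
proof -
  obtain e0 where e0: "e0 > 0" "\<not> eventually (\<lambda>x. norm (f x - x) \<le> e0 * norm x) at_top"
    using assms unfolding asymp_equiv_altdef smallo_def by auto
  define e where "e = min e0 (1 / 2)"
  have "frequently (\<lambda>x. e * \<bar>x\<bar> < \<bar>f x - x\<bar>) at_top"
  proof (rule frequently_elim1)
    show "frequently (\<lambda>x. \<not> norm (f x - x) \<le> e0 * norm x) at_top"
      using e0(2) by (simp add: frequently_def)
    show "e * \<bar>x\<bar> < \<bar>f x - x\<bar>" if "\<not> norm (f x - x) \<le> e0 * norm x" for x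
      using that mult_right_mono[of e e0 "\<bar>x\<bar>"] unfolding e_def by auto
  qed
  moreover have "e > 0" "e \<le> 1 / 2"
    using e0(1) unfolding e_def by auto
  ultimately show ?thesis
    using that by blast
qed

lemma qi_fixing_image_moving_sequence:
  assumes "is_qi f" "e \<le> 1 / 2" and freq: "frequently (\<lambda>x. e * \<bar>x\<bar> < \<bar>f x - x\<bar>) at_top"
  obtains g xs where "is_qi g" "\<And>n. g (f (xs n)) = f (xs n)" "\<And>n. e * xs n / 2 \<le> g (xs n) - xs n"
    "\<And>n. xs n \<ge> 1" "filterlim xs at_top sequentially"
proof -
  obtain \<mu> c where \<mu>c: "\<mu> \<ge> 1" "c \<ge> 0"
    and bounds: "\<And>x. x \<ge> 0 \<Longrightarrow> x / \<mu> - c \<le> f x \<and> f x \<le> \<mu> * x + c"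
    using is_qi_linear_bounds[OF assms(1)] by blast
  have B: "2 * (\<mu> + c) + \<mu> * (2 + c) \<ge> 1"
    using \<mu>c by (smt (verit) mult_nonneg_nonneg)
  obtain xs where xs_moved: "\<And>n. e * \<bar>xs n\<bar> < \<bar>f (xs n) - xs n\<bar>"
    and xs_ge: "\<And>n. xs n \<ge> 1"
    and sparse: "\<And>m n. m < n \<Longrightarrow> (2 * (\<mu> + c) + \<mu> * (2 + c)) * xs m \<le> xs n"
    and xs_lim: "filterlim xs at_top sequentially"
    using frequently_at_top_sparse_sequence[OF freq B] by blast
  define S where "S = insert 0 (range (\<lambda>m. f (xs m)))"
  define g where "g = (\<lambda>x. x + infdist x S / 2)"
  have "is_qi g"
    unfolding g_def S_def by (rule bump_is_qi) simp
  moreover have "g (f (xs n)) = f (xs n)" for n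
    unfolding g_def S_def by simp
  moreover have "e * xs n / 2 \<le> g (xs n) - xs n" for n
  proof -
    have "e * xs k < \<bar>f (xs k) - xs k\<bar>" for k
      using xs_moved[of k] xs_ge[of k] by simp
    from infdist_sparse_image_ge[OF bounds \<mu>c assms(2) xs_ge this sparse] show ?thesis
      unfolding g_def S_def by simp
  qed
  ultimately show ?thesis
    by (rule that[OF _ _ _ xs_ge xs_lim])
qed

lemma not_qi_equiv_comp_commuted:
  assumes f: "is_qi f" and h: "h \<sim>[at_top] (\<lambda>x. x)" and "e > 0"
    and g_fixes: "\<And>n. g (f (xs n)) = f (xs n)" and g_moves: "\<And>n. e * xs n / 2 \<le> g (xs n) - xs n"
    and xs_ge: "\<And>n. xs n \<ge> 1" and xs_lim: "filterlim xs at_top sequentially"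
  shows "\<not> qi_equiv (f \<circ> g) (h \<circ> (g \<circ> f))"
proof
  assume "qi_equiv (f \<circ> g) (h \<circ> (g \<circ> f))"
  then obtain C where C: "\<And>x. x \<ge> 0 \<Longrightarrow> dist (f (g x)) (h (g (f x))) \<le> C"
    unfolding qi_equiv_def by auto
  obtain \<mu> \<delta> M where \<mu>: "\<mu> \<ge> 1"
    and lower: "\<And>x y. x \<ge> 0 \<Longrightarrow> y \<ge> 0 \<Longrightarrow> dist x y / \<mu> - \<delta> \<le> dist (f x) (f y)"
    using is_qiE[OF f] by metis
  have "(\<lambda>x. h (f x) - f x) \<in> o[at_top](\<lambda>x. x)"
    using asymp_equiv_compose'[OF h is_qi_filterlim_at_top[OF f]]
    unfolding asymp_equiv_altdef by (rule landau_o.small_big_trans[OF _ is_qi_bigo_id[OF f]])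
  then have "eventually (\<lambda>x. norm (h (f x) - f x) \<le> e / (4 * \<mu>) * norm x) at_top"
    using \<open>e > 0\<close> \<mu> by (intro landau_o.smallD) auto
  then have "eventually (\<lambda>n. norm (h (f (xs n)) - f (xs n)) \<le> e / (4 * \<mu>) * norm (xs n)) sequentially"
    using xs_lim by (auto simp: filterlim_iff)
  moreover have "eventually (\<lambda>n. 4 * \<mu> * (C + \<delta>) / e < xs n) sequentially"
    using xs_lim by (simp add: filterlim_at_top_dense)
  ultimately have "eventually (\<lambda>n. False) sequentially"
  proof eventually_elim
    case (elim n)
    define x where "x = xs n"
    have x: "x \<ge> 1" "C + \<delta> < e * x / (4 * \<mu>)"
      using xs_ge[of n] elim(2) \<open>e > 0\<close> \<mu> by (auto simp: x_def field_simps)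
    have "e * x / 2 \<le> dist (g x) x"
      unfolding x_def dist_real_def using g_moves[of n] abs_ge_self[of "g (xs n) - xs n"] by linarith
    then have "e * x / 2 / \<mu> - \<delta> \<le> dist (g x) x / \<mu> - \<delta>"
      using \<mu> by (intro diff_right_mono divide_right_mono) auto
    also have "\<dots> \<le> dist (f (g x)) (f x)"
    proof (rule lower)
      have "0 \<le> e * x"
        using \<open>e > 0\<close> x(1) by simp
      then show "0 \<le> g x"
        using g_moves[of n] x(1) unfolding x_def by linarith
    qed (use x in simp)
    also have "\<dots> \<le> dist (f (g x)) (h (f x)) + dist (h (f x)) (f x)"
      by (rule dist_triangle)
    also have "\<dots> \<le> C + e / (4 * \<mu>) * x"
      using C[of x] elim(1) g_fixes[of n] x(1) by (auto simp: x_def dist_real_def)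
    finally have "e * x / 2 / \<mu> - \<delta> \<le> C + e / (4 * \<mu>) * x" .
    moreover have "e * x / 2 / \<mu> = 2 * (e * x / (4 * \<mu>))" "e / (4 * \<mu>) * x = e * x / (4 * \<mu>)"
      by simp_all
    ultimately show False
      using x(2) by linarith
  qed
  then show False
    by simp
qed

lemma asymp_equiv_id_if_commutes_mod_asymp_equiv_id:
  assumes "is_qi f"
    and commutes: "\<And>g. is_qi g \<Longrightarrow> \<exists>h. h \<sim>[at_top] (\<lambda>x. x) \<and> qi_equiv (f \<circ> g) (h \<circ> (g \<circ> f))"
  shows "f \<sim>[at_top] (\<lambda>x. x)"
proof (rule ccontr)
  assume "\<not> f \<sim>[at_top] (\<lambda>x. x)"
  then obtain e where e: "e > 0" "e \<le> 1 / 2" "frequently (\<lambda>x. e * \<bar>x\<bar> < \<bar>f x - x\<bar>) at_top"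
    by (rule not_asymp_equiv_id_frequently)
  then obtain g xs where g: "is_qi g" "\<And>n. g (f (xs n)) = f (xs n)" "\<And>n. e * xs n / 2 \<le> g (xs n) - xs n"
    and xs: "\<And>n. xs n \<ge> 1" "filterlim xs at_top sequentially"
    using qi_fixing_image_moving_sequence[OF assms(1) e(2,3)] by blast
  then obtain h where "h \<sim>[at_top] (\<lambda>x. x)" "qi_equiv (f \<circ> g) (h \<circ> (g \<circ> f))"
    using commutes by blast
  with not_qi_equiv_comp_commuted[OF assms(1) _ e(1) g(2,3) xs] show False
    by blast
qed

lemma qi_commute_mod_N_Rplus:
  assumes "is_qi f" "is_qi g"
    and "qi_class f \<otimes>\<^bsub>QI_Rplus\<^esub> qi_class g \<in> N_Rplus #>\<^bsub>QI_Rplus\<^esub> (qi_class g \<otimes>\<^bsub>QI_Rplus\<^esub> qi_class f)"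
  shows "\<exists>h. h \<sim>[at_top] (\<lambda>x. x) \<and> qi_equiv (f \<circ> g) (h \<circ> (g \<circ> f))"
proof -
  obtain n where "n \<in> N_Rplus" "qi_class (f \<circ> g) = n \<otimes>\<^bsub>QI_Rplus\<^esub> qi_class (g \<circ> f)"
    using assms by (auto simp: r_coset_def mult_QI_Rplus)
  then obtain h where h: "is_qi h" "h \<sim>[at_top] (\<lambda>x. x)" "qi_class (f \<circ> g) = qi_class (h \<circ> (g \<circ> f))"
    using assms(1,2) by (auto simp: N_Rplus_altdef mult_QI_Rplus is_qi_comp)
  have "f \<circ> g \<in> qi_class (h \<circ> (g \<circ> f))"
    using h(3) qi_class_self is_qi_rplus_map is_qi_comp assms(1,2) by metis
  then show ?thesis
    using h(2) qi_equiv_sym by (auto simp: mem_qi_class_iff)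
qed

theorem mainTheorem7:
  shows "N_Rplus \<lhd> QI_Rplus \<and>
         group_center (QI_Rplus Mod N_Rplus) = {\<one>\<^bsub>QI_Rplus Mod N_Rplus\<^esub>}"
proof
  show normal: "N_Rplus \<lhd> QI_Rplus"
    by (rule N_Rplus_normal)
  show "group_center (QI_Rplus Mod N_Rplus) = {\<one>\<^bsub>QI_Rplus Mod N_Rplus\<^esub>}"
  proof (rule normal.group_center_FactGroup_eq_oneI[OF normal])
    fix a assume "a \<in> carrier QI_Rplus"
      and commutes: "\<And>b. b \<in> carrier QI_Rplus \<Longrightarrow>
        a \<otimes>\<^bsub>QI_Rplus\<^esub> b \<in> N_Rplus #>\<^bsub>QI_Rplus\<^esub> (b \<otimes>\<^bsub>QI_Rplus\<^esub> a)"
    then obtain f where f: "is_qi f" "a = qi_class f"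
      by (auto simp: carrier_QI_Rplus)
    have "f \<sim>[at_top] (\<lambda>x. x)"
      using f(1) by (rule asymp_equiv_id_if_commutes_mod_asymp_equiv_id)
        (use f commutes qi_commute_mod_N_Rplus in \<open>auto simp: carrier_QI_Rplus\<close>)
    then show "a \<in> N_Rplus"
      using f by (simp add: qi_class_in_N_Rplus_iff)
  qed
qed

end
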